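(* Let $K\subset\mathbb{R}^n$ and $C\subset\mathbb{R}^m$ be nonempty, convex, closed and bounded sets, and let $f,h:\mathbb{R}^n\times\mathbb{R}^m\to\mathbb{R}$ be continuous functions such that, for every $y\in K$, $f(y,\cdot)$ and $h(y,\cdot)$ are convex, and such that $f$ takes only positive values. Fix $\varepsilon>0$ and, for $y\in K$, let $\mathcal{S}_\varepsilon(y)=\operatorname{argmin}\{h(y,z)+\varepsilon f^2(y,z)\mid z\in C\}$. Then the map $v_\varepsilon: y\mapsto\{f(y,x)\mid x\in\mathcal{S}_\varepsilon(y)\}$, defined on $K$, is single-valued, and the resulting real-valued function $v_\varepsilon:K\to\mathbb{R}$ is continuous.
   Context: $f^2(y,z)$ denotes $(f(y,z))^2$. *)

theory Defs
  imports "HOL-Analysis.Analysis"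
begin

definition S_eps :: "('a \<Rightarrow> 'b \<Rightarrow> real) \<Rightarrow> ('a \<Rightarrow> 'b \<Rightarrow> real) \<Rightarrow> real \<Rightarrow> 'b set \<Rightarrow> 'a \<Rightarrow> 'b set" where
  "S_eps f h \<epsilon> C y =
     {z \<in> C. \<forall>w\<in>C. h y z + \<epsilon> * (f y z)\<^sup>2 \<le> h y w + \<epsilon> * (f y w)\<^sup>2}"

end

theory Submission
  imports Defs
begin

text \<open>
  Since \<open>t \<mapsto> t\<^sup>2\<close> is strictly convex and increasing on \<open>[0, \<infinity>)\<close>, at the midpoint of two
  minimizers with different \<open>f\<close>-values the objective \<open>h + \<epsilon> f\<^sup>2\<close> would drop strictly below
  their common minimal value; so \<open>f\<close> is constant on each argmin set. The pairs \<open>(y, z)\<close> with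
  \<open>z\<close> a minimizer form a compact set, whose image under \<open>(y, z) \<mapsto> (y, f y z)\<close> is the graph
  of \<open>v\<^sub>\<epsilon>\<close>. A function with closed graph and values in a compact set is continuous.
\<close>

definition argmin_on :: "'a set \<Rightarrow> ('a \<Rightarrow> 'b::linorder) \<Rightarrow> 'a set" where
  "argmin_on C \<phi> = {z \<in> C. \<forall>w\<in>C. \<phi> z \<le> \<phi> w}"

lemma S_eps_eq_argmin_on: "S_eps f h \<epsilon> C y = argmin_on C (\<lambda>z. h y z + \<epsilon> * (f y z)\<^sup>2)"
  by (simp add: S_eps_def argmin_on_def)

lemma argmin_on_nonempty:
  fixes \<phi> :: "'a::topological_space \<Rightarrow> 'b::linorder_topology"
  assumes "compact C" "C \<noteq> {}" "continuous_on C \<phi>"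
  shows "argmin_on C \<phi> \<noteq> {}"
  using continuous_attains_inf[OF assms] by (auto simp: argmin_on_def)

lemma argmin_on_add_scaled_square_eq:
  fixes \<phi> \<psi> :: "'a::real_vector \<Rightarrow> real"
  assumes "convex_on C \<phi>" "convex_on C \<psi>" "\<And>z. z \<in> C \<Longrightarrow> 0 \<le> \<phi> z" "\<epsilon> > 0"
    and z1: "z1 \<in> argmin_on C (\<lambda>z. \<psi> z + \<epsilon> * (\<phi> z)\<^sup>2)"
    and z2: "z2 \<in> argmin_on C (\<lambda>z. \<psi> z + \<epsilon> * (\<phi> z)\<^sup>2)"
  shows "\<phi> z1 = \<phi> z2"
proof (rule ccontr)
  assume neq: "\<phi> z1 \<noteq> \<phi> z2"
  define g where "g z = \<psi> z + \<epsilon> * (\<phi> z)\<^sup>2" for z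
  define m where "m = (1/2) *\<^sub>R z1 + (1/2) *\<^sub>R z2"
  have C: "z1 \<in> C" "z2 \<in> C" using z1 z2 by (auto simp: argmin_on_def)
  then have "m \<in> C"
    using convex_on_imp_convex[OF \<open>convex_on C \<phi>\<close>] by (simp add: m_def convex_def)
  have \<psi>_mid: "\<psi> m \<le> (1/2) * \<psi> z1 + (1/2) * \<psi> z2"
    using convex_onD[OF \<open>convex_on C \<psi>\<close>, of "1/2" z1 z2] C by (simp add: m_def)
  have "\<phi> m \<le> (1/2) * \<phi> z1 + (1/2) * \<phi> z2"
    using convex_onD[OF \<open>convex_on C \<phi>\<close>, of "1/2" z1 z2] C by (simp add: m_def)
  then have "(\<phi> m)\<^sup>2 \<le> ((1/2) * \<phi> z1 + (1/2) * \<phi> z2)\<^sup>2"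
    using assms(3)[OF \<open>m \<in> C\<close>] by (intro power_mono)
  also have "\<dots> < (1/2) * (\<phi> z1)\<^sup>2 + (1/2) * (\<phi> z2)\<^sup>2"
  proof -
    have "0 < (\<phi> z1 - \<phi> z2)\<^sup>2" using neq by simp
    then show ?thesis by (simp add: power2_eq_square algebra_simps)
  qed
  finally have "\<epsilon> * (\<phi> m)\<^sup>2 < \<epsilon> * ((1/2) * (\<phi> z1)\<^sup>2 + (1/2) * (\<phi> z2)\<^sup>2)"
    using \<open>\<epsilon> > 0\<close> by (rule mult_strict_left_mono)
  also have "\<dots> = (1/2) * (\<epsilon> * (\<phi> z1)\<^sup>2) + (1/2) * (\<epsilon> * (\<phi> z2)\<^sup>2)"
    by (simp add: algebra_simps)
  finally have "g m < (1/2) * g z1 + (1/2) * g z2"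
    using \<psi>_mid unfolding g_def by argo
  moreover have "g z1 \<le> g m" "g z2 \<le> g m"
    using z1 z2 \<open>m \<in> C\<close> by (auto simp: argmin_on_def g_def)
  ultimately show False by linarith
qed

lemma continuous_on_slice:
  assumes "continuous_on (A \<times> B) (\<lambda>(y, z). g y z)" "y \<in> A"
  shows "continuous_on B (g y)"
proof -
  have "continuous_on B (\<lambda>z. (\<lambda>(y, z). g y z) (y, z))"
    by (rule continuous_on_compose2[OF assms(1)]) (use assms(2) in \<open>auto intro: continuous_intros\<close>)
  then show ?thesis by simp
qed

lemma closed_argmin_on_graph:
  fixes g :: "'a::topological_space \<Rightarrow> 'b::topological_space \<Rightarrow> real"
  assumes "closed K" "closed C" and g: "continuous_on (K \<times> C) (\<lambda>(y, z). g y z)"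
  shows "closed {(y, z). y \<in> K \<and> z \<in> argmin_on C (g y)}"
proof -
  have slice: "continuous_on (K \<times> C) (\<lambda>p. (\<lambda>(y, z). g y z) (fst p, w))" if "w \<in> C" for w
    by (rule continuous_on_compose2[OF g]) (use that in \<open>auto intro!: continuous_intros\<close>)
  have "{(y, z). y \<in> K \<and> z \<in> argmin_on C (g y)}
      = (K \<times> C) \<inter> (\<Inter>w\<in>C. {p \<in> K \<times> C. (\<lambda>(y, z). g y z) p \<le> g (fst p) w})"
    by (auto simp: argmin_on_def)
  also have "closed \<dots>"
    using assms slice
    by (intro closed_Int closed_Times closed_INT ballI continuous_on_closed_Collect_le) auto
  finally show ?thesis .
qed

text \<open>A special case of Berge's maximum theorem.\<close>

lemma continuous_on_value_on_argmin:
  fixes g F :: "'a::euclidean_space \<Rightarrow> 'b::euclidean_space \<Rightarrow> real"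
  assumes "compact K" "compact C" "C \<noteq> {}"
    and g: "continuous_on (K \<times> C) (\<lambda>(y, z). g y z)"
    and F: "continuous_on (K \<times> C) (\<lambda>(y, z). F y z)"
    and F_eq: "\<And>y z1 z2. y \<in> K \<Longrightarrow> z1 \<in> argmin_on C (g y) \<Longrightarrow> z2 \<in> argmin_on C (g y)
                 \<Longrightarrow> F y z1 = F y z2"
  shows "\<exists>v. (\<forall>y\<in>K. {F y z | z. z \<in> argmin_on C (g y)} = {v y}) \<and> continuous_on K v"
proof (intro exI conjI)
  define v where "v y = F y (SOME z. z \<in> argmin_on C (g y))" for y
  have argmin_ex: "\<exists>z. z \<in> argmin_on C (g y)" if "y \<in> K" for y
    using argmin_on_nonempty[OF \<open>compact C\<close> \<open>C \<noteq> {}\<close> continuous_on_slice[OF g that]] by blast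
  have v_eq: "v y = F y z" if "y \<in> K" "z \<in> argmin_on C (g y)" for y z
    unfolding v_def using F_eq[OF that(1) someI_ex[OF argmin_ex[OF that(1)]] that(2)] .
  show "\<forall>y\<in>K. {F y z | z. z \<in> argmin_on C (g y)} = {v y}"
    using argmin_ex v_eq by fastforce
  define G where "G = {(y, z). y \<in> K \<and> z \<in> argmin_on C (g y)}"
  have "G \<subseteq> K \<times> C" by (auto simp: G_def argmin_on_def)
  have "compact ((K \<times> C) \<inter> G)"
    using assms(1,2) closed_argmin_on_graph[OF compact_imp_closed compact_imp_closed g]
    by (intro compact_Int_closed compact_Times) (simp_all add: G_def)
  with \<open>G \<subseteq> K \<times> C\<close> have "compact G"
    by (simp add: Int_absorb1)
  have graph: "(\<lambda>y. (y, v y)) ` K = (\<lambda>(y, z). (y, F y z)) ` G"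
    using v_eq by (auto simp: G_def image_iff) (metis argmin_ex)
  have "compact ((\<lambda>y. (y, v y)) ` K)"
    unfolding graph
    using \<open>compact G\<close> continuous_on_subset[OF F \<open>G \<subseteq> K \<times> C\<close>]
    by (intro compact_continuous_image) (auto simp: case_prod_beta intro!: continuous_intros)
  then have "closed ((\<lambda>y. (y, v y)) ` K)"
    by (rule compact_imp_closed)
  moreover have "v \<in> K \<rightarrow> (\<lambda>(y, z). F y z) ` (K \<times> C)"
    using argmin_ex v_eq by (fastforce simp: argmin_on_def)
  moreover have "compact ((\<lambda>(y, z). F y z) ` (K \<times> C))"
    using assms(1,2) F by (intro compact_continuous_image compact_Times)
  ultimately show "continuous_on K v"
    by (intro continuous_from_closed_graph)
qed

theorem lemma2p3:
  fixes K :: "(real^'n) set" and C :: "(real^'m) set"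
    and f h :: "real^'n \<Rightarrow> real^'m \<Rightarrow> real" and \<epsilon> :: real
  assumes "K \<noteq> {}" "convex K" "closed K" "bounded K"
    and "C \<noteq> {}" "convex C" "closed C" "bounded C"
    and "continuous_on UNIV (\<lambda>(y, z). f y z)"
    and "continuous_on UNIV (\<lambda>(y, z). h y z)"
    and "\<And>y. y \<in> K \<Longrightarrow> convex_on UNIV (f y)"
    and "\<And>y. y \<in> K \<Longrightarrow> convex_on UNIV (h y)"
    and "\<And>y z. f y z > 0"
    and "\<epsilon> > 0"
  shows "\<exists>v :: real^'n \<Rightarrow> real.
           (\<forall>y\<in>K. {f y x | x. x \<in> S_eps f h \<epsilon> C y} = {v y}) \<and> continuous_on K v"
proof -
  let ?g = "\<lambda>y z. h y z + \<epsilon> * (f y z)\<^sup>2"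
  have "compact K" "compact C"
    using assms(3,4,7,8) by (simp_all add: compact_eq_bounded_closed)
  have f_cont: "continuous_on (K \<times> C) (\<lambda>(y, z). f y z)"
    using assms(9) by (rule continuous_on_subset) simp
  have "(\<lambda>(y, z). ?g y z) = (\<lambda>p. (\<lambda>(y, z). h y z) p + \<epsilon> * ((\<lambda>(y, z). f y z) p)\<^sup>2)"
    by (auto simp: fun_eq_iff)
  then have "continuous_on UNIV (\<lambda>(y, z). ?g y z)"
    using assms(9,10) by (simp only:) (intro continuous_intros)
  then have g_cont: "continuous_on (K \<times> C) (\<lambda>(y, z). ?g y z)"
    by (rule continuous_on_subset) simp
  have same_value: "f y z1 = f y z2"
    if "y \<in> K" "z1 \<in> argmin_on C (?g y)" "z2 \<in> argmin_on C (?g y)" for y z1 z2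
    using argmin_on_add_scaled_square_eq[OF _ _ less_imp_le[OF assms(13)] \<open>\<epsilon> > 0\<close> that(2,3)]
      convex_on_subset assms(6,11,12) that(1) by blast
  show ?thesis
    using continuous_on_value_on_argmin[OF \<open>compact K\<close> \<open>compact C\<close> \<open>C \<noteq> {}\<close> g_cont f_cont same_value]
    by (simp add: S_eps_eq_argmin_on)
qed

end
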